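(* Let $1\le m\le k-1$, $K=\{1,\dots,k\}$, $T\subseteq K$ with $|T|=m$, and let $\mathcal{V}=\{\bm v_1,\dots,\bm v_{m-1}\}$ be $m-1$ distinct points of $PG(k-1,q)$ with $\mathrm{supp}(\bm v_i)\cap T=\emptyset$ for all $i$. Then the set $M=X^T\cup Y^T_{\mathcal V}\cup Z^T$ is a $(k-m)$-block over $\mathbb{F}_q$; that is, every $m$-dimensional linear subspace of $\mathbb{F}_q^k$ contains (a representing vector of) at least one point of $M$.
   Context: Points of $PG(k-1,q)$ are one-dimensional subspaces of $\mathbb{F}_q^k$, identified with any nonzero representing vector; the support $\mathrm{supp}(\bm x)=\{i:x_i\neq0\}$ of a point is well defined. $\bm e_i$ denotes the $i$-th standard unit vector of $\mathbb{F}_q^k$. Define $X^T=\{\bm x\in PG(k-1,q): \mathrm{supp}(\bm x)\cap T=\emptyset\}$; $Y^T_{\mathcal V}=\{\bm x\in PG(k-1,q): |\mathrm{supp}(\bm x)\cap T|=1\}$ minus all points represented by $\bm v_i+\lambda\bm e_j$ with $\bm v_i\in\mathcal V$, $j\in T$, $\lambda\in\mathbb{F}_q\setminus\{0\}$; $Z^T=\{\bm x\in PG(k-1,q): \mathrm{supp}(\bm x)\text{ is a 2-element subset of }T\}$. For $1\le r\le k-1$, a set $M$ of points of $PG(k-1,q)$ is an $r$-block if every $(k-r)$-dimensional linear subspace of $\mathbb{F}_q^k$ contains at least one point of $M$. *)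

theory Defs
  imports Main
begin

text \<open>Vectors of F_q^k are modelled as functions nat => 'a vanishing outside
  the coordinate set {1..k}; 'a is a finite field (F_q).  Points of PG(k-1,q)
  are represented by nonzero vectors; all sets of points below are unions of
  full projective classes (closed under nonzero scaling).\<close>

definition vecs :: "nat \<Rightarrow> (nat \<Rightarrow> 'a::zero) set" where
  "vecs k = {x. \<forall>i. i \<notin> {1..k} \<longrightarrow> x i = 0}"

definition supp :: "(nat \<Rightarrow> 'a::zero) \<Rightarrow> nat set" where
  "supp x = {i. x i \<noteq> 0}"

definition unitv :: "nat \<Rightarrow> nat \<Rightarrow> 'a::{zero,one}" where
  "unitv j = (\<lambda>i. if i = j then 1 else 0)"

definition smult_v :: "'a::times \<Rightarrow> (nat \<Rightarrow> 'a) \<Rightarrow> nat \<Rightarrow> 'a" where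
  "smult_v c x = (\<lambda>i. c * x i)"

definition add_v :: "(nat \<Rightarrow> 'a::plus) \<Rightarrow> (nat \<Rightarrow> 'a) \<Rightarrow> nat \<Rightarrow> 'a" where
  "add_v x y = (\<lambda>i. x i + y i)"

definition same_point :: "(nat \<Rightarrow> 'a::field) \<Rightarrow> (nat \<Rightarrow> 'a) \<Rightarrow> bool" where
  "same_point x y \<longleftrightarrow> (\<exists>c. c \<noteq> 0 \<and> x = smult_v c y)"

definition lin_comb :: "nat \<Rightarrow> (nat \<Rightarrow> 'a::field) \<Rightarrow> (nat \<Rightarrow> nat \<Rightarrow> 'a) \<Rightarrow> nat \<Rightarrow> 'a" where
  "lin_comb d c w = (\<lambda>i. \<Sum>j<d. c j * w j i)"

definition lin_indep :: "nat \<Rightarrow> (nat \<Rightarrow> nat \<Rightarrow> 'a::field) \<Rightarrow> bool" where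
  "lin_indep d w \<longleftrightarrow> (\<forall>c. lin_comb d c w = (\<lambda>_. 0) \<longrightarrow> (\<forall>j<d. c j = 0))"

definition subspace_of_dim :: "nat \<Rightarrow> nat \<Rightarrow> (nat \<Rightarrow> 'a::field) set \<Rightarrow> bool" where
  "subspace_of_dim k d W \<longleftrightarrow>
     (\<exists>w. (\<forall>j<d. w j \<in> vecs k) \<and> lin_indep d w \<and> W = {lin_comb d c w | c. True})"

definition is_block :: "nat \<Rightarrow> nat \<Rightarrow> (nat \<Rightarrow> 'a::field) set \<Rightarrow> bool" where
  "is_block k r M \<longleftrightarrow>
     (\<forall>W. subspace_of_dim k (k - r) W \<longrightarrow> (\<exists>x\<in>W. x \<noteq> (\<lambda>_. 0) \<and> x \<in> M))"

definition Xset :: "nat \<Rightarrow> nat set \<Rightarrow> (nat \<Rightarrow> 'a::field) set" where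
  "Xset k T = {x \<in> vecs k. x \<noteq> (\<lambda>_. 0) \<and> supp x \<inter> T = {}}"

definition Yset :: "nat \<Rightarrow> nat set \<Rightarrow> (nat \<Rightarrow> 'a::field) set \<Rightarrow> (nat \<Rightarrow> 'a) set" where
  "Yset k T V = {x \<in> vecs k. x \<noteq> (\<lambda>_. 0) \<and> card (supp x \<inter> T) = 1 \<and>
     \<not> (\<exists>v\<in>V. \<exists>j\<in>T. \<exists>c. c \<noteq> 0 \<and> same_point x (add_v v (smult_v c (unitv j))))}"

definition Zset :: "nat \<Rightarrow> nat set \<Rightarrow> (nat \<Rightarrow> 'a::field) set" where
  "Zset k T = {x \<in> vecs k. card (supp x) = 2 \<and> supp x \<subseteq> T}"

end

theory Submission
  imports Defs "HOL-Library.FuncSet"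
begin

text \<open>Let W be an m-dimensional subspace and project it onto the coordinates in T.
  If the projection is not injective on W, a nonzero vector of W vanishes on T and
  lies in X. Otherwise, counting (both sides have q^m elements) shows that every
  unit vector e_j, j \<in> T, is the projection of some u_j \<in> W. If no u_j lies in Y,
  each u_j is a multiple of v + c e_j with v \<in> V; since |T| = m > m - 1 = |V|, two
  of them share the same v, and a suitable combination of these two has support
  {j1, j2} \<subseteq> T, i.e. lies in Z.\<close>

definition supported_on :: "nat set \<Rightarrow> (nat \<Rightarrow> 'a::zero) set" where
  "supported_on A = {x. \<forall>i. i \<notin> A \<longrightarrow> x i = 0}"

definition coord_proj :: "nat set \<Rightarrow> (nat \<Rightarrow> 'a::zero) \<Rightarrow> nat \<Rightarrow> 'a" where
  "coord_proj A x = (\<lambda>i. if i \<in> A then x i else 0)"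

lemma vecs_eq_supported_on: "vecs k = supported_on {1..k}"
  by (simp add: vecs_def supported_on_def)

lemma coord_proj_supported_on: "coord_proj A x \<in> supported_on A"
  by (simp add: coord_proj_def supported_on_def)

lemma bij_betw_restrict_supported_on:
  "bij_betw (\<lambda>f. restrict f A) (supported_on A) (PiE A (\<lambda>_. UNIV))"
  by (rule bij_betw_byWitness[where f'="\<lambda>h j. if j \<in> A then h j else 0"])
     (auto simp: fun_eq_iff restrict_def PiE_def extensional_def supported_on_def)

lemma
  fixes A :: "nat set"
  assumes "finite A"
  shows finite_supported_on: "finite (supported_on A :: (nat \<Rightarrow> 'a::{finite,zero}) set)"
    and card_supported_on: "card (supported_on A :: (nat \<Rightarrow> 'a) set) = card (UNIV :: 'a set) ^ card A"
proof -
  have bij: "bij_betw (\<lambda>f. restrict f A) (supported_on A :: (nat \<Rightarrow> 'a) set) (PiE A (\<lambda>_. UNIV))"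
    by (rule bij_betw_restrict_supported_on)
  show "finite (supported_on A :: (nat \<Rightarrow> 'a) set)"
    using bij_betw_finite[OF bij] assms by (simp add: finite_PiE)
  show "card (supported_on A :: (nat \<Rightarrow> 'a) set) = card (UNIV :: 'a set) ^ card A"
    using bij_betw_same_card[OF bij] assms by (simp add: card_PiE)
qed

lemma finite_vecs: "finite (vecs k :: (nat \<Rightarrow> 'a::{finite,zero}) set)"
  by (simp add: vecs_eq_supported_on finite_supported_on)

lemma lin_comb_combine:
  "add_v (smult_v a (lin_comb d c w)) (smult_v b (lin_comb d c' w))
     = lin_comb d (\<lambda>j. a * c j + b * c' j) w"
  by (simp add: fun_eq_iff add_v_def smult_v_def lin_comb_def
      sum_distrib_left sum.distrib algebra_simps)

lemma lin_comb_cong: "(\<And>j. j < d \<Longrightarrow> c j = c' j) \<Longrightarrow> lin_comb d c w = lin_comb d c' w"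
  by (simp add: lin_comb_def)

lemma inj_on_lin_comb:
  assumes "lin_indep d w"
  shows "inj_on (\<lambda>c. lin_comb d c w) (supported_on {..<d})"
proof (rule inj_onI)
  fix c c' assume c: "c \<in> supported_on {..<d}" and c': "c' \<in> supported_on {..<d}"
    and eq: "lin_comb d c w = lin_comb d c' w"
  have "lin_comb d (\<lambda>j. 1 * c j + (-1) * c' j) w = (\<lambda>_. 0)"
    using lin_comb_combine[of 1 d c w "-1" c'] eq
    by (simp add: fun_eq_iff add_v_def smult_v_def)
  with assms have "\<forall>j<d. 1 * c j + (-1) * c' j = 0"
    unfolding lin_indep_def by blast
  then have "c j = c' j" if "j < d" for j using that by simp
  moreover have "c j = c' j" if "\<not> j < d" for j
    using c c' that by (simp add: supported_on_def)
  ultimately show "c = c'" by blast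
qed

lemma subspace_eq_image_lin_comb:
  assumes "W = {lin_comb d c w | c. True}"
  shows "W = (\<lambda>c. lin_comb d c w) ` supported_on {..<d}"
proof -
  have "lin_comb d c w \<in> (\<lambda>c. lin_comb d c w) ` supported_on {..<d}" for c
    by (rule image_eqI[of _ _ "\<lambda>j. if j < d then c j else 0"])
       (auto intro: lin_comb_cong simp: supported_on_def)
  with assms show ?thesis by blast
qed

lemma card_subspace_of_dim:
  fixes W :: "(nat \<Rightarrow> 'a::{finite,field}) set"
  assumes "subspace_of_dim k d W"
  shows "card W = card (UNIV :: 'a set) ^ d"
proof -
  obtain w where w: "lin_indep d w" and W: "W = {lin_comb d c w | c. True}"
    using assms unfolding subspace_of_dim_def by blast
  have "card W = card (supported_on {..<d} :: (nat \<Rightarrow> 'a) set)"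
    by (subst subspace_eq_image_lin_comb[OF W]) (rule card_image[OF inj_on_lin_comb[OF w]])
  then show ?thesis by (simp add: card_supported_on)
qed

lemma subspace_of_dim_subset_vecs: "subspace_of_dim k d W \<Longrightarrow> W \<subseteq> vecs k"
  by (auto simp: subspace_of_dim_def vecs_def lin_comb_def)

lemma subspace_of_dim_lin_closed:
  assumes "subspace_of_dim k d W" "x \<in> W" "y \<in> W"
  shows "add_v (smult_v a x) (smult_v b y) \<in> W"
  using assms lin_comb_combine unfolding subspace_of_dim_def by blast

lemma subspace_meets_complement_or_hits_units:
  fixes W :: "(nat \<Rightarrow> 'a::{finite,field}) set"
  assumes W: "subspace_of_dim k d W" and "finite T" "card T = d"
  shows "(\<exists>x\<in>W. x \<noteq> (\<lambda>_. 0) \<and> supp x \<inter> T = {})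
    \<or> (\<forall>j\<in>T. \<exists>u\<in>W. coord_proj T u = unitv j)"
proof (cases "inj_on (coord_proj T) W")
  case False
  then obtain x y where xy: "x \<in> W" "y \<in> W" "x \<noteq> y" "coord_proj T x = coord_proj T y"
    unfolding inj_on_def by blast
  let ?z = "add_v (smult_v 1 x) (smult_v (-1) y)"
  have "?z \<in> W" using subspace_of_dim_lin_closed[OF W xy(1,2)] .
  moreover have "?z \<noteq> (\<lambda>_. 0)"
    using xy(3) by (auto simp: fun_eq_iff add_v_def smult_v_def)
  moreover have "x i = y i" if "i \<in> T" for i
    using fun_cong[OF xy(4), of i] that by (simp add: coord_proj_def)
  then have "supp ?z \<inter> T = {}"
    by (auto simp: supp_def add_v_def smult_v_def)
  ultimately show ?thesis by blast
next
  case True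
  have "coord_proj T ` W = supported_on T"
  proof (rule card_subset_eq)
    show "coord_proj T ` W \<subseteq> supported_on T"
      using coord_proj_supported_on by blast
    show "card (coord_proj T ` W) = card (supported_on T :: (nat \<Rightarrow> 'a) set)"
      using assms card_image[OF True]
      by (simp add: card_subspace_of_dim card_supported_on)
  qed (simp add: \<open>finite T\<close> finite_supported_on)
  moreover have "unitv j \<in> supported_on T" if "j \<in> T" for j
    using that by (simp add: supported_on_def unitv_def)
  ultimately show ?thesis by (metis imageE)
qed

text \<open>In the excluded form v + c e_j' the index j' must be j, since v vanishes on T.\<close>

lemma not_in_Yset_imp_shifted_unit:
  assumes "u \<in> vecs k" "coord_proj T u = unitv j" "j \<in> T"
    and "u \<notin> Yset k T V" "\<forall>v\<in>V. supp v \<inter> T = {}"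
  shows "\<exists>v\<in>V. \<exists>d c. d \<noteq> 0 \<and> c \<noteq> 0 \<and> u = smult_v d (add_v v (smult_v c (unitv j)))"
proof -
  have uT: "u i = unitv j i" if "i \<in> T" for i
    using that fun_cong[OF assms(2), of i] by (simp add: coord_proj_def)
  have "supp u \<inter> T = {j}"
    using uT assms(3) by (auto simp: supp_def unitv_def split: if_splits)
  moreover have "u \<noteq> (\<lambda>_. 0)"
    using uT[OF assms(3)] by (auto simp: unitv_def fun_eq_iff intro!: exI[of _ j])
  ultimately obtain v j' c where v: "v \<in> V" "j' \<in> T" "c \<noteq> 0"
    and "same_point u (add_v v (smult_v c (unitv j')))"
    using assms(1,4) unfolding Yset_def by auto
  then obtain d where "d \<noteq> 0" and u: "u = smult_v d (add_v v (smult_v c (unitv j')))"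
    unfolding same_point_def by blast
  have "v j = 0" using assms(3,5) v(1) by (auto simp: supp_def)
  moreover have "u j = 1" using uT[OF assms(3)] by (simp add: unitv_def)
  ultimately have "d * (c * unitv j' j) = 1"
    using fun_cong[OF u, of j] by (simp add: smult_v_def add_v_def)
  then have "j' = j" by (auto simp: unitv_def split: if_splits)
  with v \<open>d \<noteq> 0\<close> u show ?thesis by blast
qed

lemma combine_shifted_units:
  fixes v :: "nat \<Rightarrow> 'a::field"
  assumes "d1 \<noteq> 0" "d2 \<noteq> 0"
  shows "add_v (smult_v (inverse d1) (smult_v d1 (add_v v (smult_v c1 (unitv j1)))))
      (smult_v (- inverse d2) (smult_v d2 (add_v v (smult_v c2 (unitv j2)))))
    = add_v (smult_v c1 (unitv j1)) (smult_v (- c2) (unitv j2))"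
  using assms by (simp add: fun_eq_iff add_v_def smult_v_def field_simps)

lemma supp_two_units:
  fixes c1 c2 :: "'a::field"
  assumes "c1 \<noteq> 0" "c2 \<noteq> 0" "j1 \<noteq> j2"
  shows "supp (add_v (smult_v c1 (unitv j1)) (smult_v c2 (unitv j2))) = {j1, j2}"
  using assms by (auto simp: supp_def add_v_def smult_v_def unitv_def)

lemma shifted_units_give_Zset_point:
  assumes W: "subspace_of_dim k d W"
    and u1: "smult_v d1 (add_v v (smult_v c1 (unitv j1))) \<in> W"
    and u2: "smult_v d2 (add_v v (smult_v c2 (unitv j2))) \<in> W"
    and "d1 \<noteq> 0" "d2 \<noteq> 0" "c1 \<noteq> 0" "c2 \<noteq> 0" "j1 \<noteq> j2" "j1 \<in> T" "j2 \<in> T"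
  shows "\<exists>x\<in>W. x \<noteq> (\<lambda>_. 0) \<and> x \<in> Zset k T"
proof -
  let ?z = "add_v (smult_v c1 (unitv j1)) (smult_v (- c2) (unitv j2))"
  have "?z \<in> W"
    using subspace_of_dim_lin_closed[OF W u1 u2, of "inverse d1" "- inverse d2"]
    by (simp only: combine_shifted_units[OF \<open>d1 \<noteq> 0\<close> \<open>d2 \<noteq> 0\<close>])
  moreover have supp_z: "supp ?z = {j1, j2}"
    using supp_two_units[of c1 "- c2"] assms(6-8) by simp
  then have "j1 \<in> supp ?z" by simp
  then have "?z \<noteq> (\<lambda>_. 0)" by (auto simp: supp_def)
  moreover have "?z \<in> Zset k T"
    using \<open>?z \<in> W\<close> subspace_of_dim_subset_vecs[OF W] supp_z assms(8-10)
    unfolding Zset_def by auto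
  ultimately show ?thesis by blast
qed

lemma unit_preimages_meet_Yset_or_Zset:
  assumes W: "subspace_of_dim k d W" and "finite V" "card V < card T"
    and V_T: "\<forall>v\<in>V. supp v \<inter> T = {}"
    and units: "\<forall>j\<in>T. \<exists>u\<in>W. coord_proj T u = unitv j"
  shows "\<exists>x\<in>W. x \<noteq> (\<lambda>_. 0) \<and> x \<in> Yset k T V \<union> Zset k T"
proof -
  obtain u where u: "\<And>j. j \<in> T \<Longrightarrow> u j \<in> W \<and> coord_proj T (u j) = unitv j"
    using units by metis
  show ?thesis
  proof (cases "\<exists>j\<in>T. u j \<in> Yset k T V")
    case True
    then obtain j where "j \<in> T" "u j \<in> Yset k T V" by blast
    moreover from \<open>u j \<in> Yset k T V\<close> have "u j \<noteq> (\<lambda>_. 0)"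
      unfolding Yset_def by blast
    ultimately show ?thesis using u by blast
  next
    case False
    then have "\<forall>j\<in>T. \<exists>v\<in>V. \<exists>d c. d \<noteq> 0 \<and> c \<noteq> 0 \<and> u j = smult_v d (add_v v (smult_v c (unitv j)))"
      using u subspace_of_dim_subset_vecs[OF W] V_T
      by (blast intro: not_in_Yset_imp_shifted_unit)
    then obtain f where f: "\<And>j. j \<in> T \<Longrightarrow> f j \<in> V \<and>
        (\<exists>d c. d \<noteq> 0 \<and> c \<noteq> 0 \<and> u j = smult_v d (add_v (f j) (smult_v c (unitv j))))"
      by metis
    have "\<not> inj_on f T"
      using card_inj_on_le[of f T V] f \<open>finite V\<close> \<open>card V < card T\<close> by fastforce
    then obtain j1 j2 where j: "j1 \<in> T" "j2 \<in> T" "j1 \<noteq> j2" "f j1 = f j2"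
      unfolding inj_on_def by blast
    then obtain d1 c1 d2 c2 where "d1 \<noteq> 0" "c1 \<noteq> 0" "d2 \<noteq> 0" "c2 \<noteq> 0"
      and "smult_v d1 (add_v (f j1) (smult_v c1 (unitv j1))) \<in> W"
      and "smult_v d2 (add_v (f j1) (smult_v c2 (unitv j2))) \<in> W"
      using f u by metis
    with j show ?thesis
      using shifted_units_give_Zset_point[OF W] by blast
  qed
qed

theorem mainTheorem16:
  fixes k m :: nat and T :: "nat set" and V :: "(nat \<Rightarrow> 'a::{finite,field}) set"
  assumes "1 \<le> m" and "m \<le> k - 1"
    and "T \<subseteq> {1..k}" and "card T = m"
    and "V \<subseteq> vecs k" and "\<forall>v\<in>V. v \<noteq> (\<lambda>_. 0)"
    and "card V = m - 1"
    and "\<forall>v\<in>V. \<forall>w\<in>V. v \<noteq> w \<longrightarrow> \<not> same_point v w"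
    and "\<forall>v\<in>V. supp v \<inter> T = {}"
  shows "is_block k (k - m) (Xset k T \<union> Yset k T V \<union> Zset k T)"
  unfolding is_block_def
proof (intro allI impI)
  fix W :: "(nat \<Rightarrow> 'a) set"
  assume "subspace_of_dim k (k - (k - m)) W"
  then have W: "subspace_of_dim k m W" using assms(1,2) by simp
  have "finite T" using assms(3) finite_subset by blast
  have "finite V" using assms(5) finite_vecs finite_subset by blast
  consider (X) "\<exists>x\<in>W. x \<noteq> (\<lambda>_. 0) \<and> supp x \<inter> T = {}"
    | (units) "\<forall>j\<in>T. \<exists>u\<in>W. coord_proj T u = unitv j"
    using subspace_meets_complement_or_hits_units[OF W \<open>finite T\<close> assms(4)] by blast
  then show "\<exists>x\<in>W. x \<noteq> (\<lambda>_. 0) \<and> x \<in> Xset k T \<union> Yset k T V \<union> Zset k T"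
  proof cases
    case X
    then show ?thesis using subspace_of_dim_subset_vecs[OF W] by (auto simp: Xset_def)
  next
    case units
    then show ?thesis
      using unit_preimages_meet_Yset_or_Zset[OF W \<open>finite V\<close> _ assms(9)] assms(1,4,7) by auto
  qed
qed

end
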